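(* Let $M\in\mathbb{R}^{n\times n}$ be symmetric with eigenvalues ordered so that $|\lambda_1|\ge|\lambda_2|\ge\cdots$, where $\lambda=\lambda_1>0$ and $\lambda_1>|\lambda_2|$. Let $u$ be the unit leading eigenvector, $l_2=|\lambda_2|/\lambda$, and $0<\theta\le\frac1{40}(1-l_2)^{3/2}$. Let $\{S^{(\ell)}\}_{\ell\ge1}$ be i.i.d. random $n\times n$ matrices such that: - $\mathbb{E}[S^{(\ell)}]=M$; - $\|S^{(\ell)}-M\|_2\le\theta\|M\|_2$; - $S^{(\ell)}$ is almost surely non-singular; - no proper subspace $V$ satisfies $S^{(\ell)}V\subseteq V$ almost surely. Define $\mathsf G=\{\mathbf x\in\mathsf P_n: d(\mathbf x,\mathbf u)\le 2\theta/(1-l_2)\}$, where $\mathbf u$ is the class of $u$. Then: 1. For any $\mathbf x\in\mathsf G$, $S^{(\ell)}\mathbf x\in\mathsf G$. 2. With $\rho\equiv1-\frac45(1-l_2)\in(0,1)$, for any $\mathbf x\ne\mathbf y\in\mathsf G$, $$\mathbb{E}\,d(S^{(\ell)}\mathbf x,S^{(\ell)}\mathbf y)\le\rho\,d(\mathbf x,\mathbf y).$$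
   Context: $\mathsf P_n$ is the projective space (unit vectors of $\mathbb{R}^n$ modulo sign), with metric $d(\mathbf x,\mathbf y)=\sqrt{1-\langle x,y\rangle^2}$ for unit representatives $x,y$. An invertible matrix $S$ acts on $\mathsf P_n$ by mapping the class of $x$ to the class of $Sx/\|Sx\|$. $\|\cdot\|_2$ is the operator norm. *)

theory Defs
  imports "HOL-Analysis.Analysis" "HOL-Probability.Probability"
begin

text \<open>Points of the projective space P_n are represented by unit vectors of R^n;
  a unit vector and its negative represent the same point.\<close>

definition proj_pt :: "real^'n \<Rightarrow> bool" where
  "proj_pt x \<longleftrightarrow> norm x = 1"

definition proj_dist :: "real^'n \<Rightarrow> real^'n \<Rightarrow> real" where
  "proj_dist x y = sqrt (1 - (x \<bullet> y)^2)"

definition proj_act :: "real^'n^'n \<Rightarrow> real^'n \<Rightarrow> real^'n" where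
  "proj_act S x = (1 / norm (S *v x)) *\<^sub>R (S *v x)"

definition op_norm2 :: "real^'n^'n \<Rightarrow> real" where
  "op_norm2 A = onorm (\<lambda>x. A *v x)"

end

theory Submission
  imports Defs
begin

text \<open>
  For unit vectors the projective distance is the length of the rejection of one vector from
  the other, and \<open>d(Sx/|Sx|, Sy/|Sy|) = |rej(Sx, Sy)| / |Sx|\<close>. Write \<open>\<kappa> = |\<lambda>\<^sub>2|/\<lambda>\<close>
  and \<open>r = 2\<theta>/(1 - \<kappa>)\<close>. If \<open>d(x,u) \<le> r\<close>, then \<open>Sx\<close> has a component of size at least
  \<open>\<lambda>(1 - r\<^sup>2 - \<theta>)\<close> along \<open>u\<close> and at most \<open>\<lambda>(\<kappa> r + \<theta>)\<close> orthogonal to it, because \<open>M\<close>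
  shrinks \<open>u\<^sup>\<bottom>\<close> by \<open>\<kappa>\<close> and \<open>S - M\<close> costs at most \<open>\<theta>\<lambda>\<close>; this keeps the ball \<open>G\<close>
  invariant. For the contraction write \<open>x = w + \<langle>x,y\<rangle> y\<close> with \<open>w \<bottom> y\<close> and \<open>|w| = d(x,y)\<close>:
  the rejection of \<open>Sx\<close> from \<open>Sy\<close> equals that of \<open>Sw\<close>, and since \<open>y\<close> is close to \<open>u\<close>, the
  component of \<open>w\<close> along \<open>u\<close> is only \<open>O(r |w|)\<close>, so \<open>Sw\<close> is essentially \<open>(S - M) w\<close> plus
  \<open>M\<close> applied to a vector in \<open>u\<^sup>\<bottom>\<close>.

  The bounds hold for every matrix with \<open>\<parallel>S - M\<parallel>\<^sub>2 \<le> \<theta> \<parallel>M\<parallel>\<^sub>2\<close>, so only this almost sure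
  bound is used.
\<close>

section \<open>Rejection and the projective distance\<close>

definition reject :: "'a::real_inner \<Rightarrow> 'a \<Rightarrow> 'a" where
  "reject a b = a - ((a \<bullet> b) / (norm b)\<^sup>2) *\<^sub>R b"

lemma reject_unit: "norm b = 1 \<Longrightarrow> reject a b = a - (a \<bullet> b) *\<^sub>R b"
  by (simp add: reject_def)

lemma reject_orthogonal: "reject a b \<bullet> b = 0"
  by (cases "b = 0") (simp_all add: reject_def inner_diff_left dot_square_norm)

lemma reject_add: "reject (a + c) b = reject a b + reject c b"
  by (simp add: reject_def inner_add_left add_divide_distrib scaleR_add_left)

lemma reject_scaleR: "reject (t *\<^sub>R a) b = t *\<^sub>R reject a b"
  by (simp add: reject_def scaleR_diff_right)

lemma reject_add_scaleR: "reject (a + t *\<^sub>R b) b = reject a b"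
  by (cases "b = 0") (simp_all add: reject_def inner_add_left dot_square_norm
      add_divide_distrib scaleR_add_left)

lemma reject_self: "reject b b = 0"
  by (cases "b = 0") (simp_all add: reject_def dot_square_norm)

lemma reject_scaleR_right:
  assumes "t \<noteq> 0"
  shows "reject a (t *\<^sub>R b) = reject a b"
proof -
  have "t * (a \<bullet> b) / (t\<^sup>2 * (norm b)\<^sup>2) * t = (a \<bullet> b) / (norm b)\<^sup>2"
    using assms by (simp add: power2_eq_square)
  then show ?thesis
    by (simp add: reject_def power_mult_distrib)
qed

lemma norm_reject_Pythagorean:
  "(norm a)\<^sup>2 = (norm (reject a b))\<^sup>2 + (norm (((a \<bullet> b) / (norm b)\<^sup>2) *\<^sub>R b))\<^sup>2"
proof -
  have "a = reject a b + ((a \<bullet> b) / (norm b)\<^sup>2) *\<^sub>R b"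
    by (simp add: reject_def)
  moreover have "orthogonal (reject a b) (((a \<bullet> b) / (norm b)\<^sup>2) *\<^sub>R b)"
    by (simp add: orthogonal_def reject_orthogonal)
  ultimately show ?thesis
    by (metis norm_add_Pythagorean)
qed

lemma norm_reject_le: "norm (reject a b) \<le> norm a"
  by (rule power2_le_imp_le) (simp_all add: norm_reject_Pythagorean[of a b])

lemma proj_dist_eq_norm_reject:
  fixes a b :: "real^'n"
  assumes "norm a = 1" "norm b = 1"
  shows "proj_dist a b = norm (reject a b)"
proof -
  have "(norm (reject a b))\<^sup>2 = 1 - (a \<bullet> b)\<^sup>2"
    using norm_reject_Pythagorean[of a b] assms by (simp add: power_mult_distrib)
  then have "proj_dist a b = sqrt ((norm (reject a b))\<^sup>2)"
    by (simp add: proj_dist_def)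
  then show ?thesis
    by simp
qed

lemma proj_dist_nonneg:
  fixes a b :: "real^'n"
  shows "norm a = 1 \<Longrightarrow> norm b = 1 \<Longrightarrow> 0 \<le> proj_dist a b"
  by (simp add: proj_dist_eq_norm_reject)

lemma proj_dist_commute: "proj_dist a b = proj_dist b a"
  by (simp add: proj_dist_def inner_commute)

lemma proj_dist_normalize:
  fixes a b :: "real^'n"
  assumes "a \<noteq> 0" "b \<noteq> 0"
  shows "proj_dist ((1 / norm a) *\<^sub>R a) ((1 / norm b) *\<^sub>R b) = norm (reject a b) / norm a"
proof -
  have "proj_dist ((1 / norm a) *\<^sub>R a) ((1 / norm b) *\<^sub>R b)
      = norm (reject ((1 / norm a) *\<^sub>R a) ((1 / norm b) *\<^sub>R b))"
    using assms by (intro proj_dist_eq_norm_reject) simp_all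
  also have "\<dots> = norm (reject a b) / norm a"
    using assms by (simp add: reject_scaleR reject_scaleR_right)
  finally show ?thesis .
qed

lemma norm_proj_act: "S *v x \<noteq> 0 \<Longrightarrow> norm (proj_act S x) = 1"
  by (simp add: proj_act_def)

lemma proj_dist_act_unit:
  assumes "S *v x \<noteq> 0" "norm u = 1"
  shows "proj_dist (proj_act S x) u = norm (reject (S *v x) u) / norm (S *v x)"
proof -
  have "u \<noteq> 0"
    using assms(2) by auto
  then show ?thesis
    using proj_dist_normalize[OF assms(1), of u] assms(2) by (simp add: proj_act_def)
qed

lemma abs_inner_ge_of_proj_dist_le:
  fixes x u :: "real^'n"
  assumes "norm x = 1" "norm u = 1" "proj_dist x u \<le> r"
  shows "1 - r\<^sup>2 \<le> \<bar>x \<bullet> u\<bar>"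
proof -
  have "\<bar>x \<bullet> u\<bar> \<le> 1"
    using Cauchy_Schwarz_ineq2[of x u] assms by simp
  then have "\<bar>x \<bullet> u\<bar> * \<bar>x \<bullet> u\<bar> \<le> \<bar>x \<bullet> u\<bar>"
    by (rule mult_left_le) simp
  then have "(x \<bullet> u)\<^sup>2 \<le> \<bar>x \<bullet> u\<bar>"
    by (simp add: power2_eq_square)
  moreover have "(proj_dist x u)\<^sup>2 = 1 - (x \<bullet> u)\<^sup>2"
    using norm_reject_Pythagorean[of x u] assms
    by (simp add: proj_dist_eq_norm_reject power_mult_distrib)
  moreover have "(proj_dist x u)\<^sup>2 \<le> r\<^sup>2"
    using assms by (intro power_mono) (simp_all add: proj_dist_nonneg)
  ultimately show ?thesis
    by linarith
qed

text \<open>The rejections of \<open>w\<close> and \<open>y\<close> from \<open>u\<close> have inner product \<open>-\<langle>w,u\<rangle>\<langle>y,u\<rangle>\<close>,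
  and \<open>|\<langle>y,u\<rangle>| \<ge> 1 - r\<^sup>2\<close>.\<close>

lemma abs_inner_le_of_orthogonal_near:
  fixes w y u :: "real^'n"
  assumes y: "norm y = 1" and u: "norm u = 1" and near: "proj_dist y u \<le> r"
    and wy: "w \<bullet> y = 0"
  shows "\<bar>w \<bullet> u\<bar> * (1 - r\<^sup>2) \<le> r * norm w"
proof -
  have "reject w u \<bullet> reject y u = - ((w \<bullet> u) * (y \<bullet> u))"
    using wy u by (simp add: reject_unit inner_diff_left inner_diff_right dot_square_norm
        inner_commute algebra_simps)
  then have "\<bar>w \<bullet> u\<bar> * \<bar>y \<bullet> u\<bar> \<le> norm (reject w u) * norm (reject y u)"
    by (metis Cauchy_Schwarz_ineq2 abs_minus_cancel abs_mult)
  also have "\<dots> \<le> norm w * r"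
    using near y u by (intro mult_mono norm_reject_le) (simp_all add: proj_dist_eq_norm_reject)
  finally have "\<bar>w \<bullet> u\<bar> * \<bar>y \<bullet> u\<bar> \<le> norm w * r" .
  moreover have "\<bar>w \<bullet> u\<bar> * (1 - r\<^sup>2) \<le> \<bar>w \<bullet> u\<bar> * \<bar>y \<bullet> u\<bar>"
    using abs_inner_ge_of_proj_dist_le[OF y u near] by (intro mult_left_mono) simp_all
  ultimately show ?thesis
    by (simp add: mult.commute)
qed

section \<open>Perturbations of a matrix with a dominant eigenvector\<close>

locale perturbed_top_eigenvector =
  fixes M S :: "real^'n^'n" and u :: "real^'n" and L \<kappa> \<theta> :: real
  assumes u_unit: "norm u = 1"
    and u_eigen: "M *v u = L *\<^sub>R u"
    and L_pos: "0 < L"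
    and kappa_nonneg: "0 \<le> \<kappa>"
    and perp_invariant: "\<And>w. w \<bullet> u = 0 \<Longrightarrow> (M *v w) \<bullet> u = 0"
    and perp_bound: "\<And>w. w \<bullet> u = 0 \<Longrightarrow> norm (M *v w) \<le> \<kappa> * L * norm w"
    and perturbation_bound: "\<And>z. norm ((S - M) *v z) \<le> \<theta> * L * norm z"
begin

lemma theta_nonneg: "0 \<le> \<theta>"
proof -
  have "0 \<le> \<theta> * L"
    using perturbation_bound[of u] u_unit by (metis norm_ge_zero order_trans mult.right_neutral)
  then show ?thesis
    using L_pos by (simp add: zero_le_mult_iff)
qed

lemma image_decomposition:
  "S *v x = ((x \<bullet> u) * L) *\<^sub>R u + M *v reject x u + (S - M) *v x"
  by (simp add: reject_unit u_unit u_eigen matrix_vector_mult_diff_distrib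
      matrix_vector_mult_diff_rdistrib matrix_vector_mult_scaleR)

lemma norm_reject_image_le:
  "norm (reject (S *v w) b)
    \<le> \<bar>w \<bullet> u\<bar> * L * norm (reject u b) + \<kappa> * L * norm (reject w u) + \<theta> * L * norm w"
proof -
  have "reject (S *v w) b
      = ((w \<bullet> u) * L) *\<^sub>R reject u b + reject (M *v reject w u) b + reject ((S - M) *v w) b"
    by (subst image_decomposition) (simp add: reject_add reject_scaleR)
  also have "norm \<dots> \<le> norm (((w \<bullet> u) * L) *\<^sub>R reject u b) + norm (reject (M *v reject w u) b)
      + norm (reject ((S - M) *v w) b)"
    by (rule order_trans[OF norm_triangle_ineq add_right_mono[OF norm_triangle_ineq]])
  also have "\<dots> \<le> \<bar>w \<bullet> u\<bar> * L * norm (reject u b) + \<kappa> * L * norm (reject w u) + \<theta> * L * norm w"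
  proof (intro add_mono)
    show "norm (((w \<bullet> u) * L) *\<^sub>R reject u b) \<le> \<bar>w \<bullet> u\<bar> * L * norm (reject u b)"
      using L_pos by (simp add: abs_mult)
    show "norm (reject (M *v reject w u) b) \<le> \<kappa> * L * norm (reject w u)"
      by (rule order_trans[OF norm_reject_le perp_bound[OF reject_orthogonal]])
    show "norm (reject ((S - M) *v w) b) \<le> \<theta> * L * norm w"
      by (rule order_trans[OF norm_reject_le perturbation_bound])
  qed
  finally show ?thesis .
qed

lemma norm_image_ge:
  assumes x: "norm x = 1" and near: "proj_dist x u \<le> r"
  shows "L * (1 - r\<^sup>2 - \<theta>) \<le> norm (S *v x)"
proof -
  have "(S *v x) \<bullet> u = (x \<bullet> u) * L + ((S - M) *v x) \<bullet> u"
    using perp_invariant[OF reject_orthogonal] u_unit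
    by (subst image_decomposition) (simp add: inner_add_left dot_square_norm)
  moreover have "\<bar>((S - M) *v x) \<bullet> u\<bar> \<le> \<theta> * L"
    using Cauchy_Schwarz_ineq2[of "(S - M) *v x" u] perturbation_bound[of x] x u_unit by simp
  moreover have "L * (1 - r\<^sup>2) \<le> \<bar>(x \<bullet> u) * L\<bar>"
    using abs_inner_ge_of_proj_dist_le[OF x u_unit near] L_pos by (simp add: abs_mult)
  moreover have "\<bar>(S *v x) \<bullet> u\<bar> \<le> norm (S *v x)"
    using Cauchy_Schwarz_ineq2[of "S *v x" u] u_unit by simp
  ultimately show ?thesis
    by (simp add: algebra_simps)
qed

lemma proj_dist_act_le:
  assumes x: "norm x = 1" and near: "proj_dist x u \<le> r" and small: "\<theta> < 1 - r\<^sup>2"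
  shows "S *v x \<noteq> 0" and "proj_dist (proj_act S x) u \<le> (\<kappa> * r + \<theta>) / (1 - r\<^sup>2 - \<theta>)"
proof -
  have lower: "L * (1 - r\<^sup>2 - \<theta>) \<le> norm (S *v x)" and pos: "0 < L * (1 - r\<^sup>2 - \<theta>)"
    using norm_image_ge[OF x near] small L_pos by simp_all
  then show nz: "S *v x \<noteq> 0"
    by auto
  have "\<kappa> * L * norm (reject x u) \<le> \<kappa> * L * r"
    using near kappa_nonneg L_pos by (intro mult_left_mono) (simp_all add: x u_unit proj_dist_eq_norm_reject)
  then have "norm (reject (S *v x) u) \<le> (\<kappa> * r + \<theta>) * L"
    using norm_reject_image_le[of x u] by (simp add: reject_self x algebra_simps)
  then have "proj_dist (proj_act S x) u \<le> (\<kappa> * r + \<theta>) * L / (L * (1 - r\<^sup>2 - \<theta>))"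
    unfolding proj_dist_act_unit[OF nz u_unit]
    using lower pos proj_dist_nonneg[OF x u_unit] near kappa_nonneg theta_nonneg L_pos
    by (intro frac_le) simp_all
  then show "proj_dist (proj_act S x) u \<le> (\<kappa> * r + \<theta>) / (1 - r\<^sup>2 - \<theta>)"
    using L_pos by simp
qed

lemma norm_reject_image_orthogonal_le:
  assumes y: "norm y = 1" "proj_dist y u \<le> r" and small: "\<theta> < 1 - r\<^sup>2"
    and image_near: "proj_dist (proj_act S y) u \<le> s" and wy: "w \<bullet> y = 0"
  shows "norm (reject (S *v w) (S *v y)) \<le> L * ((r * s / (1 - r\<^sup>2) + \<kappa> + \<theta>) * norm w)"
proof -
  have Sy: "S *v y \<noteq> 0"
    using proj_dist_act_le(1) y small by blast
  have s: "0 \<le> s" and c: "0 < 1 - r\<^sup>2"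
    using proj_dist_nonneg[OF norm_proj_act[OF Sy] u_unit] image_near theta_nonneg small by linarith+
  have "u \<noteq> 0"
    using u_unit by auto
  then have "norm (reject u (S *v y)) \<le> s"
    using proj_dist_normalize[OF _ Sy, of u] image_near u_unit
    by (simp add: proj_act_def proj_dist_commute)
  then have "\<bar>w \<bullet> u\<bar> * L * norm (reject u (S *v y)) \<le> \<bar>w \<bullet> u\<bar> * L * s"
    using L_pos by (intro mult_left_mono) simp_all
  moreover have "\<kappa> * L * norm (reject w u) \<le> \<kappa> * L * norm w"
    using kappa_nonneg L_pos by (intro mult_left_mono norm_reject_le) simp
  ultimately have "norm (reject (S *v w) (S *v y))
      \<le> \<bar>w \<bullet> u\<bar> * L * s + \<kappa> * L * norm w + \<theta> * L * norm w"
    using norm_reject_image_le[of w "S *v y"] by linarith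
  also have "\<dots> \<le> r * norm w / (1 - r\<^sup>2) * L * s + \<kappa> * L * norm w + \<theta> * L * norm w"
    using abs_inner_le_of_orthogonal_near[OF y(1) u_unit y(2) wy] c L_pos s
    by (intro add_right_mono mult_right_mono) (simp_all add: le_divide_eq)
  also have "\<dots> = L * ((r * s / (1 - r\<^sup>2) + \<kappa> + \<theta>) * norm w)"
    using c by (simp add: field_simps)
  finally show ?thesis .
qed

lemma proj_dist_act_contracts:
  assumes x: "norm x = 1" "proj_dist x u \<le> r" and y: "norm y = 1" "proj_dist y u \<le> r"
    and small: "\<theta> < 1 - r\<^sup>2" and image_near: "proj_dist (proj_act S y) u \<le> s"
  shows "proj_dist (proj_act S x) (proj_act S y)
    \<le> (r * s / (1 - r\<^sup>2) + \<kappa> + \<theta>) / (1 - r\<^sup>2 - \<theta>) * proj_dist x y"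
proof -
  define w where "w = reject x y"
  define C where "C = r * s / (1 - r\<^sup>2) + \<kappa> + \<theta>"
  have w: "norm w = proj_dist x y" "w \<bullet> y = 0"
    using x y by (simp_all add: w_def proj_dist_eq_norm_reject reject_orthogonal)
  have Sx: "S *v x \<noteq> 0" and Sy: "S *v y \<noteq> 0"
    using proj_dist_act_le(1) x y small by blast+
  have "0 \<le> C"
    using proj_dist_nonneg[OF x(1) u_unit] x(2) proj_dist_nonneg[OF norm_proj_act[OF Sy] u_unit]
      image_near kappa_nonneg theta_nonneg small by (simp add: C_def)
  have "S *v x = S *v w + (x \<bullet> y) *\<^sub>R (S *v y)"
    using y by (simp add: w_def reject_unit matrix_vector_mult_diff_distrib matrix_vector_mult_scaleR)
  then have "norm (reject (S *v x) (S *v y)) \<le> L * (C * proj_dist x y)"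
    using norm_reject_image_orthogonal_le[OF y small image_near w(2)]
    by (simp add: reject_add_scaleR C_def w(1))
  then have "proj_dist (proj_act S x) (proj_act S y) \<le> L * (C * proj_dist x y) / (L * (1 - r\<^sup>2 - \<theta>))"
    unfolding proj_act_def proj_dist_normalize[OF Sx Sy]
    using norm_image_ge[OF x] small L_pos \<open>0 \<le> C\<close> proj_dist_nonneg[OF x(1) y(1)]
    by (intro frac_le) simp_all
  then show ?thesis
    using L_pos by (simp add: C_def)
qed

lemma proj_act_maps_ball:
  assumes small: "\<theta> < 1 - r\<^sup>2" and radius: "(\<kappa> * r + \<theta>) / (1 - r\<^sup>2 - \<theta>) \<le> r"
    and x: "norm x = 1" "proj_dist x u \<le> r"
  shows "norm (proj_act S x) = 1" and "proj_dist (proj_act S x) u \<le> r"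
  using proj_dist_act_le[OF x small] radius norm_proj_act by auto

lemma proj_act_contracts_ball:
  assumes small: "\<theta> < 1 - r\<^sup>2" and radius: "(\<kappa> * r + \<theta>) / (1 - r\<^sup>2 - \<theta>) \<le> r"
    and rate: "(r * r / (1 - r\<^sup>2) + \<kappa> + \<theta>) / (1 - r\<^sup>2 - \<theta>) \<le> \<rho>"
    and x: "norm x = 1" "proj_dist x u \<le> r" and y: "norm y = 1" "proj_dist y u \<le> r"
  shows "proj_dist (proj_act S x) (proj_act S y) \<le> \<rho> * proj_dist x y"
proof -
  have "proj_dist (proj_act S x) (proj_act S y)
      \<le> (r * r / (1 - r\<^sup>2) + \<kappa> + \<theta>) / (1 - r\<^sup>2 - \<theta>) * proj_dist x y"
    using proj_dist_act_contracts[OF x y small proj_act_maps_ball(2)[OF small radius y]] .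
  also have "\<dots> \<le> \<rho> * proj_dist x y"
    using rate proj_dist_nonneg[OF x(1) y(1)] by (rule mult_right_mono)
  finally show ?thesis .
qed

end

section \<open>Symmetric matrices with a spectral gap\<close>

definition orthonormal_on :: "'i set \<Rightarrow> ('i \<Rightarrow> 'a::real_inner) \<Rightarrow> bool" where
  "orthonormal_on I v \<longleftrightarrow> (\<forall>i\<in>I. \<forall>j\<in>I. v i \<bullet> v j = (if i = j then 1 else 0))"

lemma orthonormal_on_expansion:
  fixes v :: "'i \<Rightarrow> 'a::euclidean_space"
  assumes on: "orthonormal_on I v" and I: "finite I" "card I = DIM('a)"
  shows "(\<Sum>i\<in>I. (x \<bullet> v i) *\<^sub>R v i) = x"
proof -
  have inj: "inj_on v I"
  proof (rule inj_onI)
    fix i j assume ij: "i \<in> I" "j \<in> I" "v i = v j"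
    then have "v i \<bullet> v j = 1"
      using on by (simp add: orthonormal_on_def)
    moreover have "v i \<bullet> v j = (if i = j then 1 else 0)"
      using on ij(1,2) by (simp add: orthonormal_on_def)
    ultimately show "i = j"
      by (simp split: if_splits)
  qed
  have orth: "pairwise orthogonal (v ` I)" and unit: "\<And>b. b \<in> v ` I \<Longrightarrow> norm b = 1"
    using on by (auto simp: orthonormal_on_def pairwise_def orthogonal_def norm_eq_sqrt_inner)
  have "0 \<notin> v ` I"
    using unit by (metis norm_zero zero_neq_one)
  with orth have "independent (v ` I)"
    by (rule pairwise_orthogonal_independent)
  then have "span (v ` I) = UNIV"
    using card_eq_dim[of "v ` I" UNIV] I card_image[OF inj] by auto
  then have "(\<Sum>b\<in>v ` I. (x \<bullet> b) *\<^sub>R b) = x"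
    using orthonormal_basis_expand[OF orth unit] I by blast
  then show ?thesis
    by (simp add: sum.reindex[OF inj])
qed

lemma norm_sum_orthonormal_on:
  assumes on: "orthonormal_on I v" and I: "finite I"
  shows "(norm (\<Sum>i\<in>I. a i *\<^sub>R v i))\<^sup>2 = (\<Sum>i\<in>I. (a i)\<^sup>2)"
proof -
  have "(norm (\<Sum>i\<in>I. a i *\<^sub>R v i))\<^sup>2 = (\<Sum>i\<in>I. (norm (a i *\<^sub>R v i))\<^sup>2)"
    using on by (intro norm_sum_Pythagorean[OF I]) (auto simp: orthonormal_on_def pairwise_def orthogonal_def)
  also have "\<dots> = (\<Sum>i\<in>I. (a i)\<^sup>2)"
    using on by (intro sum.cong) (simp_all add: orthonormal_on_def norm_eq_sqrt_inner power_mult_distrib)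
  finally show ?thesis .
qed

lemma norm_le_of_eigenbasis:
  fixes f :: "'a::euclidean_space \<Rightarrow> 'a"
  assumes "linear f" and on: "orthonormal_on I v" and I: "finite I" "card I = DIM('a)"
    and eigen: "\<And>i. i \<in> I \<Longrightarrow> f (v i) = lam i *\<^sub>R v i"
    and "0 \<le> c" and bound: "\<And>i. i \<in> I \<Longrightarrow> x \<bullet> v i \<noteq> 0 \<Longrightarrow> \<bar>lam i\<bar> \<le> c"
  shows "norm (f x) \<le> c * norm x"
proof -
  have "f x = f (\<Sum>i\<in>I. (x \<bullet> v i) *\<^sub>R v i)"
    by (simp add: orthonormal_on_expansion[OF on I])
  also have "\<dots> = (\<Sum>i\<in>I. (lam i * (x \<bullet> v i)) *\<^sub>R v i)"
    using eigen by (simp add: linear_sum[OF \<open>linear f\<close>] linear_scale[OF \<open>linear f\<close>] mult.commute)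
  finally have "f x = (\<Sum>i\<in>I. (lam i * (x \<bullet> v i)) *\<^sub>R v i)" .
  then have "(norm (f x))\<^sup>2 = (\<Sum>i\<in>I. (lam i * (x \<bullet> v i))\<^sup>2)"
    by (simp only: norm_sum_orthonormal_on[OF on I(1)])
  moreover have "(\<Sum>i\<in>I. (lam i * (x \<bullet> v i))\<^sup>2) \<le> (\<Sum>i\<in>I. (c * (x \<bullet> v i))\<^sup>2)"
  proof (rule sum_mono)
    fix i assume "i \<in> I"
    have "\<bar>lam i\<bar> * \<bar>x \<bullet> v i\<bar> \<le> c * \<bar>x \<bullet> v i\<bar>"
      using bound[OF \<open>i \<in> I\<close>] by (cases "x \<bullet> v i = 0") (simp_all add: mult_right_mono)
    then have "\<bar>lam i * (x \<bullet> v i)\<bar> \<le> \<bar>c * (x \<bullet> v i)\<bar>"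
      using \<open>0 \<le> c\<close> by (simp only: abs_mult abs_of_nonneg)
    then show "(lam i * (x \<bullet> v i))\<^sup>2 \<le> (c * (x \<bullet> v i))\<^sup>2"
      by (simp only: abs_le_square_iff)
  qed
  moreover have "(\<Sum>i\<in>I. (c * (x \<bullet> v i))\<^sup>2) = (c * norm x)\<^sup>2"
    using norm_sum_orthonormal_on[OF on I(1), of "\<lambda>i. x \<bullet> v i"]
    by (simp only: orthonormal_on_expansion[OF on I] power_mult_distrib sum_distrib_left)
  ultimately have "(norm (f x))\<^sup>2 \<le> (c * norm x)\<^sup>2"
    by linarith
  then show ?thesis
    by (rule power2_le_imp_le) (use \<open>0 \<le> c\<close> in simp)
qed

lemma symmetric_matrix_inner:
  fixes M :: "real^'n^'n"
  assumes "transpose M = M"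
  shows "(M *v a) \<bullet> b = a \<bullet> (M *v b)"
proof -
  have "a v* M = M *v a"
    using transpose_matrix_vector[of M a] assms by simp
  then show ?thesis
    using dot_lmul_matrix[of a M b] by simp
qed

lemma symmetric_matrix_eigenvectors_orthogonal:
  fixes M :: "real^'n^'n"
  assumes "transpose M = M" "M *v a = \<alpha> *\<^sub>R a" "M *v b = \<beta> *\<^sub>R b" "\<alpha> \<noteq> \<beta>"
  shows "a \<bullet> b = 0"
proof -
  have "\<alpha> * (a \<bullet> b) = \<beta> * (a \<bullet> b)"
    using symmetric_matrix_inner[OF assms(1), of a b] assms(2,3) by simp
  then show ?thesis
    using assms(4) by simp
qed

lemma abs_le_of_abs_decreasing:
  fixes lam :: "nat \<Rightarrow> real"
  assumes "\<forall>i. 1 \<le> i \<and> i < N \<longrightarrow> \<bar>lam (Suc i)\<bar> \<le> \<bar>lam i\<bar>" "1 \<le> j" "j \<le> i" "i \<le> N"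
  shows "\<bar>lam i\<bar> \<le> \<bar>lam j\<bar>"
  using assms(3,4)
proof (induction i rule: dec_induct)
  case (step k)
  then have "\<bar>lam (Suc k)\<bar> \<le> \<bar>lam k\<bar>" "\<bar>lam k\<bar> \<le> \<bar>lam j\<bar>"
    using assms(1,2) by simp_all
  then show ?case
    by (rule order_trans)
qed simp

locale symmetric_spectral_gap =
  fixes M :: "real^'n^'n" and lam :: "nat \<Rightarrow> real" and v :: "nat \<Rightarrow> real^'n" and u :: "real^'n"
  assumes symmetric: "transpose M = M"
    and eigenbasis: "orthonormal_on {1..CARD('n)} v"
    and eigenvectors: "\<forall>i\<in>{1..CARD('n)}. M *v v i = lam i *\<^sub>R v i"
    and ordered: "\<forall>i. 1 \<le> i \<and> i < CARD('n) \<longrightarrow> \<bar>lam (Suc i)\<bar> \<le> \<bar>lam i\<bar>"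
    and lam1_pos: "0 < lam 1"
    and gap: "\<bar>lam 2\<bar> < lam 1"
    and u_unit: "norm u = 1"
    and u_eigen: "M *v u = lam 1 *\<^sub>R u"
begin

lemma norm_mult_le:
  assumes "0 \<le> c" "\<And>i. i \<in> {1..CARD('n)} \<Longrightarrow> x \<bullet> v i \<noteq> 0 \<Longrightarrow> \<bar>lam i\<bar> \<le> c"
  shows "norm (M *v x) \<le> c * norm x"
  using eigenvectors assms
  by (intro norm_le_of_eigenbasis[OF matrix_vector_mul_linear eigenbasis]) auto

lemma abs_eigenvalue_le: "i \<in> {2..CARD('n)} \<Longrightarrow> \<bar>lam i\<bar> \<le> \<bar>lam 2\<bar>"
  using abs_le_of_abs_decreasing[OF ordered] by simp

lemma op_norm2_le: "op_norm2 M \<le> lam 1"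
proof -
  have "\<bar>lam i\<bar> \<le> lam 1" if "i \<in> {1..CARD('n)}" for i
    using that abs_eigenvalue_le[of i] gap lam1_pos by (cases "i = 1") auto
  then show ?thesis
    unfolding op_norm2_def using lam1_pos by (intro onorm_le norm_mult_le) auto
qed

lemma u_parallel_v1: "u = (u \<bullet> v 1) *\<^sub>R v 1"
proof -
  have "u \<bullet> v i = 0" if "i \<in> {1..CARD('n)}" "i \<noteq> 1" for i
    using that abs_eigenvalue_le[of i] gap eigenvectors
    by (intro symmetric_matrix_eigenvectors_orthogonal[OF symmetric u_eigen, of "v i" "lam i"]) auto
  then have "(\<Sum>i\<in>{1..CARD('n)}. (u \<bullet> v i) *\<^sub>R v i)
      = (\<Sum>i\<in>{1..CARD('n)}. if i = 1 then (u \<bullet> v 1) *\<^sub>R v 1 else 0)"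
    by (intro sum.cong) auto
  also have "\<dots> = (u \<bullet> v 1) *\<^sub>R v 1"
    by (simp add: Suc_leI)
  finally have "(\<Sum>i\<in>{1..CARD('n)}. (u \<bullet> v i) *\<^sub>R v i) = (u \<bullet> v 1) *\<^sub>R v 1" .
  then show ?thesis
    using orthonormal_on_expansion[OF eigenbasis, of u] by simp
qed

lemma norm_mult_orthogonal_le:
  assumes "w \<bullet> u = 0"
  shows "norm (M *v w) \<le> \<bar>lam 2\<bar> * norm w"
proof (rule norm_mult_le)
  have "u \<bullet> v 1 \<noteq> 0"
  proof
    assume "u \<bullet> v 1 = 0"
    then have "u = 0"
      using u_parallel_v1 by (metis scale_zero_left)
    with u_unit show False
      by simp
  qed
  moreover have "w \<bullet> u = w \<bullet> ((u \<bullet> v 1) *\<^sub>R v 1)"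
    using u_parallel_v1 by (rule arg_cong)
  ultimately have "w \<bullet> v 1 = 0"
    using assms by simp
  then show "\<bar>lam i\<bar> \<le> \<bar>lam 2\<bar>" if "i \<in> {1..CARD('n)}" "w \<bullet> v i \<noteq> 0" for i
    using that abs_eigenvalue_le[of i] by (cases "i = 1") auto
qed simp

lemma perturbed_top_eigenvectorI:
  assumes "op_norm2 (T - M) \<le> \<theta> * op_norm2 M" "0 \<le> \<theta>"
  shows "perturbed_top_eigenvector M T u (lam 1) (\<bar>lam 2\<bar> / lam 1) \<theta>"
proof
  fix z
  have "norm ((T - M) *v z) \<le> op_norm2 (T - M) * norm z"
    unfolding op_norm2_def by (rule onorm) simp
  also have "\<dots> \<le> \<theta> * lam 1 * norm z"
    using assms op_norm2_le by (intro mult_right_mono) (simp_all add: order_trans mult_left_mono)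
  finally show "norm ((T - M) *v z) \<le> \<theta> * lam 1 * norm z" .
next
  fix w assume "w \<bullet> u = 0"
  then show "(M *v w) \<bullet> u = 0" "norm (M *v w) \<le> \<bar>lam 2\<bar> / lam 1 * lam 1 * norm w"
    using symmetric_matrix_inner[OF symmetric, of w u] u_eigen norm_mult_orthogonal_le lam1_pos
    by simp_all
qed (use u_unit u_eigen lam1_pos in auto)

end

lemma gap_parameters:
  fixes \<kappa> \<theta> :: real
  assumes "0 \<le> \<kappa>" "\<kappa> < 1" "0 < \<theta>" "\<theta> \<le> (1/40) * (1 - \<kappa>) powr (3/2)"
  defines "r \<equiv> 2 * \<theta> / (1 - \<kappa>)"
  shows "\<theta> < 1 - r\<^sup>2"
    and "(\<kappa> * r + \<theta>) / (1 - r\<^sup>2 - \<theta>) \<le> r"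
    and "(r * r / (1 - r\<^sup>2) + \<kappa> + \<theta>) / (1 - r\<^sup>2 - \<theta>) \<le> 1 - (4/5) * (1 - \<kappa>)"
proof -
  define \<delta> where "\<delta> = 1 - \<kappa>"
  have \<delta>: "0 < \<delta>" "\<delta> \<le> 1"
    using assms(1,2) by (simp_all add: \<delta>_def)
  have "(1 - \<kappa>) powr (3/2) = \<delta> * sqrt \<delta>"
    using \<delta> powr_add[of \<delta> 1 "1/2"] by (simp add: \<delta>_def powr_half_sqrt)
  then have \<theta>: "\<theta> \<le> \<delta> * sqrt \<delta> / 40"
    using assms(4) by linarith
  also have "\<dots> \<le> \<delta> / 40"
    using \<delta> by (simp add: mult_left_le)
  finally have \<theta>_le: "\<theta> \<le> \<delta> / 40" .
  have r: "r = 2 * \<theta> / \<delta>" "0 \<le> r"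
    using assms(3) \<delta> by (simp_all add: r_def \<delta>_def)
  have "2 * \<theta> \<le> sqrt \<delta> / 20 * \<delta>"
    using \<theta> by (simp add: algebra_simps)
  then have "r * \<delta> \<le> sqrt \<delta> / 20 * \<delta>"
    using \<delta> by (simp add: r(1))
  then have "r \<le> sqrt \<delta> / 20"
    using \<delta>(1) by (rule mult_right_le_imp_le)
  then have "r\<^sup>2 \<le> (sqrt \<delta> / 20)\<^sup>2"
    using r(2) by (rule power_mono)
  then have r2: "r\<^sup>2 \<le> \<delta> / 400"
    using \<delta> by (simp add: power_divide)
  show small: "\<theta> < 1 - r\<^sup>2"
    using r2 \<theta>_le \<delta> by simp
  have "\<kappa> * r + \<theta> = r * (1 - \<delta> / 2)"
    using \<delta> by (simp add: r(1) \<delta>_def field_simps)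
  also have "\<dots> \<le> r * (1 - r\<^sup>2 - \<theta>)"
    using r2 \<theta>_le r(2) \<delta> by (intro mult_left_mono) simp_all
  finally show "(\<kappa> * r + \<theta>) / (1 - r\<^sup>2 - \<theta>) \<le> r"
    using small by (simp add: divide_le_eq)
  have "r * r / (1 - r\<^sup>2) \<le> (\<delta> / 400) / (399 / 400)"
    using r2 \<delta> by (intro frac_le) (simp_all add: power2_eq_square)
  then have q: "r * r / (1 - r\<^sup>2) \<le> \<delta> / 399"
    by simp
  have X: "\<delta> * (1 - r\<^sup>2 - \<theta>) \<le> \<delta>"
    using \<delta> assms(3) zero_le_power2[of r] by (intro mult_left_le) linarith+
  have expand: "(1 - (4/5) * \<delta>) * (1 - r\<^sup>2 - \<theta>) = (1 - r\<^sup>2 - \<theta>) - (4/5) * (\<delta> * (1 - r\<^sup>2 - \<theta>))"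
    by (simp only: left_diff_distrib mult_1 mult.assoc)
  have "r * r / (1 - r\<^sup>2) + \<kappa> + \<theta> \<le> (1 - (4/5) * \<delta>) * (1 - r\<^sup>2 - \<theta>)"
    unfolding expand using q X r2 \<theta>_le \<delta> \<delta>_def by linarith
  then show "(r * r / (1 - r\<^sup>2) + \<kappa> + \<theta>) / (1 - r\<^sup>2 - \<theta>) \<le> 1 - (4/5) * (1 - \<kappa>)"
    using small by (simp add: divide_le_eq \<delta>_def)
qed

text \<open>No integrability is needed: a non-integrable function has integral \<open>0 \<le> c\<close>.\<close>

lemma (in prob_space) integral_le_nonneg_const:
  fixes f :: "'a \<Rightarrow> real"
  assumes "AE x in M. f x \<le> c" "0 \<le> c"
  shows "integral\<^sup>L M f \<le> c"
  using integral_mono_AE'[of M "\<lambda>_. c" f] assms by (simp add: prob_space)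

theorem lemma5p2:
  fixes M :: "real^'n^'n"
    and lam :: "nat \<Rightarrow> real" and v :: "nat \<Rightarrow> real^'n"
    and u :: "real^'n" and \<theta> :: real
    and P :: "'a measure" and S :: "nat \<Rightarrow> 'a \<Rightarrow> real^'n^'n"
  assumes dim: "CARD('n) \<ge> 2"
    and sym: "transpose M = M"
    and eigbasis: "\<forall>i\<in>{1..CARD('n)}. \<forall>j\<in>{1..CARD('n)}. v i \<bullet> v j = (if i = j then 1 else 0)"
    and eigvec: "\<forall>i\<in>{1..CARD('n)}. M *v v i = lam i *\<^sub>R v i"
    and ordered: "\<forall>i. 1 \<le> i \<and> i < CARD('n) \<longrightarrow> \<bar>lam (Suc i)\<bar> \<le> \<bar>lam i\<bar>"
    and lam1_pos: "lam 1 > 0"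
    and gap: "lam 1 > \<bar>lam 2\<bar>"
    and u_unit: "norm u = 1"
    and u_eig: "M *v u = lam 1 *\<^sub>R u"
    and theta_pos: "0 < \<theta>"
    and theta_le: "\<theta> \<le> (1/40) * (1 - \<bar>lam 2\<bar> / lam 1) powr (3/2)"
    and P: "prob_space P"
    and meas: "\<forall>l\<ge>1. S l \<in> borel_measurable P"
    and indep: "prob_space.indep_vars P (\<lambda>_. borel) S {1..}"
    and ident: "\<forall>l\<ge>1. distr P borel (S l) = distr P borel (S 1)"
    and mean: "\<forall>l\<ge>1. integrable P (S l) \<and> prob_space.expectation P (S l) = M"
    and bound: "\<forall>l\<ge>1. AE \<omega> in P. op_norm2 (S l \<omega> - M) \<le> \<theta> * op_norm2 M"
    and nonsing: "\<forall>l\<ge>1. AE \<omega> in P. invertible (S l \<omega>)"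
    and irred: "\<forall>l\<ge>1. \<forall>V :: (real^'n) set. subspace V \<and> V \<noteq> {0} \<and> V \<noteq> UNIV \<longrightarrow>
                   \<not> (AE \<omega> in P. (\<lambda>x. S l \<omega> *v x) ` V \<subseteq> V)"
  defines "G \<equiv> {x. proj_pt x \<and> proj_dist x u \<le> 2 * \<theta> / (1 - \<bar>lam 2\<bar> / lam 1)}"
    and "\<rho> \<equiv> 1 - (4/5) * (1 - \<bar>lam 2\<bar> / lam 1)"
  shows "(\<forall>l\<ge>1. AE \<omega> in P. \<forall>x\<in>G. proj_act (S l \<omega>) x \<in> G)
    \<and> (0 < \<rho> \<and> \<rho> < 1)
    \<and> (\<forall>l\<ge>1. \<forall>x\<in>G. \<forall>y\<in>G. y \<noteq> x \<and> y \<noteq> -x \<longrightarrow>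
          prob_space.expectation P (\<lambda>\<omega>. proj_dist (proj_act (S l \<omega>) x) (proj_act (S l \<omega>) y))
            \<le> \<rho> * proj_dist x y)"
proof -
  interpret symmetric_spectral_gap M lam v u
    using assms by unfold_locales (auto simp: orthonormal_on_def)
  interpret P: prob_space P
    by (rule P)
  define \<kappa> where "\<kappa> = \<bar>lam 2\<bar> / lam 1"
  define r where "r = 2 * \<theta> / (1 - \<kappa>)"
  have \<kappa>: "0 \<le> \<kappa>" "\<kappa> < 1"
    using gap lam1_pos by (simp_all add: \<kappa>_def)
  note param = gap_parameters[OF \<kappa> theta_pos theta_le[folded \<kappa>_def], folded r_def]
  have G: "x \<in> G \<longleftrightarrow> norm x = 1 \<and> proj_dist x u \<le> r" for x
    by (simp add: G_def proj_pt_def r_def \<kappa>_def)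
  have step: "AE \<omega> in P. perturbed_top_eigenvector M (S l \<omega>) u (lam 1) \<kappa> \<theta>" if "l \<ge> 1" for l
    using bound[rule_format, OF that] theta_pos
    by (auto simp only: \<kappa>_def elim!: eventually_mono intro!: perturbed_top_eigenvectorI)
  have rate: "(r * r / (1 - r\<^sup>2) + \<kappa> + \<theta>) / (1 - r\<^sup>2 - \<theta>) \<le> \<rho>"
    using param(3) by (simp add: \<rho>_def \<kappa>_def)
  have invariant: "proj_act T x \<in> G"
    if "perturbed_top_eigenvector M T u (lam 1) \<kappa> \<theta>" "x \<in> G" for T x
    using perturbed_top_eigenvector.proj_act_maps_ball[OF that(1) param(1,2)] that(2) by (simp add: G)
  have contracts: "proj_dist (proj_act T x) (proj_act T y) \<le> \<rho> * proj_dist x y"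
    if "perturbed_top_eigenvector M T u (lam 1) \<kappa> \<theta>" "x \<in> G" "y \<in> G" for T x y
    using perturbed_top_eigenvector.proj_act_contracts_ball[OF that(1) param(1,2) rate] that(2,3)
    by (simp add: G)
  have \<rho>: "0 < \<rho>" "\<rho> < 1"
    unfolding \<rho>_def \<kappa>_def[symmetric] using \<kappa> by simp_all
  show ?thesis
  proof (intro conjI allI impI ballI \<rho>)
    fix l :: nat assume "l \<ge> 1"
    show "AE \<omega> in P. \<forall>x\<in>G. proj_act (S l \<omega>) x \<in> G"
      using step[OF \<open>l \<ge> 1\<close>] by (rule eventually_mono) (simp add: invariant)
    fix x y assume "x \<in> G" "y \<in> G"
    then have "0 \<le> \<rho> * proj_dist x y"
      using \<rho> by (intro mult_nonneg_nonneg) (auto simp: G proj_dist_nonneg)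
    then show "P.expectation (\<lambda>\<omega>. proj_dist (proj_act (S l \<omega>) x) (proj_act (S l \<omega>) y))
        \<le> \<rho> * proj_dist x y"
      using step[OF \<open>l \<ge> 1\<close>] \<open>x \<in> G\<close> \<open>y \<in> G\<close>
      by (intro P.integral_le_nonneg_const) (auto elim!: eventually_mono intro: contracts)
  qed
qed

end
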